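(* Assume $\mathrm{recc}(C)\subseteq\mathrm{recc}(P^B)$ and fix $k\in N_2$. Then $k\notin J$, i.e., $\bar r^k\notin\mathrm{recc}(S_k^C)$.
   Context: Let $A\in\mathbb{R}^{m\times n}$ have full row rank, $b\in\mathbb{R}^m$, and $P=\{x\in\mathbb{R}^n_+:Ax=b\}$. Let $C\subseteq\mathbb{R}^n$ be an open convex set. Fix a basis $B$ of $P$ with nonbasic set $N=\{1,\dots,n\}\setminus B$. Write $P=\{x:x_i=\bar b_i-\sum_{j\in N}\bar a_{ij}x_j\ (i\in B),\ x\ge0\}$ with $\bar b\ge0$. The basic solution $\bar x$ has $\bar x_i=\bar b_i$ ($i\in B$) and $0$ ($i\in N$). $P^B$ is obtained by dropping $x_i\ge0$ for $i\in B$. For $j\in N$, $\bar r^j$ has $\bar r^j_k=-\bar a_{kj}$ ($k\in B$), $\bar r^j_j=1$, and $0$ otherwise. Thus $P^B=\{\bar x+\sum_{j\in N}x_j\bar r^j:x_j\ge0\}$. It is assumed that $\bar x\notin\mathrm{cl}(C)$. For $j\in N$, $\alpha_j=\inf\{\lambda\ge0:\bar x+\lambda\bar r^j\in C\}$ and $\beta_j=\sup\{\lambda\ge0:\bar x+\lambda\bar r^j\in C\}$, with $\alpha_j=+\infty$, $\beta_j=-\infty$ if the halfline misses $C$. Let $N_2=\{j:\alpha_j\in(0,\infty),\beta_j\in(\alpha_j,\infty)\}$. For a set $K$, $\mathrm{recc}(K)=\{d:x+\lambda d\in K\ \forall x\in K,\lambda\ge0\}$. For $k\in N_2$, $S_k^C=\{\bar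 x\}+\mathrm{conv}\big(\bigcup_{j\in N_2}\{\lambda\bar r^j:0\le\lambda<\beta_j\}\big)+\{\lambda\bar r^k:\lambda\le0\}+\mathrm{recc}(C)$, and $J=\{i\in N:\bar r^i\in\mathrm{recc}(S_k^C)\}$. *)

theory Defs
  imports "HOL-Analysis.Analysis"
begin

text \<open>B :: 'n set is the basis, N = UNIV - B.
  The simplex tableau is given by abar :: 'n => 'n => real (entries abar i j, i in B, j in N)
  and bbar :: 'n => real.\<close>

definition polyP :: "real^'n^'m \<Rightarrow> real^'m \<Rightarrow> (real^'n) set" where
  "polyP A b = {x. (\<forall>i. 0 \<le> x $ i) \<and> A *v x = b}"

definition is_basis_of :: "real^'n^'m \<Rightarrow> real^'m \<Rightarrow> 'n set \<Rightarrow> bool" where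
  "is_basis_of A b B \<longleftrightarrow> card B = CARD('m) \<and>
     card ((\<lambda>j. column j A) ` B) = CARD('m) \<and> independent ((\<lambda>j. column j A) ` B)"

definition is_tableau :: "real^'n^'m \<Rightarrow> real^'m \<Rightarrow> 'n set \<Rightarrow> ('n \<Rightarrow> 'n \<Rightarrow> real) \<Rightarrow> ('n \<Rightarrow> real) \<Rightarrow> bool" where
  "is_tableau A b B abar bbar \<longleftrightarrow>
     (\<forall>x. A *v x = b \<longleftrightarrow> (\<forall>i\<in>B. x $ i = bbar i - (\<Sum>j\<in>UNIV - B. abar i j * x $ j)))"

definition xbar :: "'n set \<Rightarrow> ('n \<Rightarrow> real) \<Rightarrow> real^'n" where
  "xbar B bbar = (\<chi> i. if i \<in> B then bbar i else 0)"

definition rbar :: "'n set \<Rightarrow> ('n \<Rightarrow> 'n \<Rightarrow> real) \<Rightarrow> 'n \<Rightarrow> real^'n" where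
  "rbar B abar j = (\<chi> k. if k \<in> B then - abar k j else if k = j then 1 else 0)"

text \<open>P^B: drop the nonnegativity constraints of the basic variables.\<close>
definition PB :: "'n set \<Rightarrow> ('n \<Rightarrow> 'n \<Rightarrow> real) \<Rightarrow> ('n \<Rightarrow> real) \<Rightarrow> (real^'n) set" where
  "PB B abar bbar = {x. (\<forall>i\<in>B. x $ i = bbar i - (\<Sum>j\<in>UNIV - B. abar i j * x $ j))
                        \<and> (\<forall>j\<in>UNIV - B. 0 \<le> x $ j)}"

definition recc :: "(real^'n) set \<Rightarrow> (real^'n) set" where
  "recc K = {d. \<forall>x\<in>K. \<forall>t::real. t \<ge> 0 \<longrightarrow> x + t *\<^sub>R d \<in> K}"

text \<open>alpha_j, beta_j as extended reals: Inf {} = +infinity, Sup {} = -infinity.\<close>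
definition alpha :: "(real^'n) set \<Rightarrow> 'n set \<Rightarrow> ('n \<Rightarrow> 'n \<Rightarrow> real) \<Rightarrow> ('n \<Rightarrow> real) \<Rightarrow> 'n \<Rightarrow> ereal" where
  "alpha C B abar bbar j =
     Inf (ereal ` {t. 0 \<le> t \<and> xbar B bbar + t *\<^sub>R rbar B abar j \<in> C})"

definition beta :: "(real^'n) set \<Rightarrow> 'n set \<Rightarrow> ('n \<Rightarrow> 'n \<Rightarrow> real) \<Rightarrow> ('n \<Rightarrow> real) \<Rightarrow> 'n \<Rightarrow> ereal" where
  "beta C B abar bbar j =
     Sup (ereal ` {t. 0 \<le> t \<and> xbar B bbar + t *\<^sub>R rbar B abar j \<in> C})"

definition N2 :: "(real^'n) set \<Rightarrow> 'n set \<Rightarrow> ('n \<Rightarrow> 'n \<Rightarrow> real) \<Rightarrow> ('n \<Rightarrow> real) \<Rightarrow> 'n set" where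
  "N2 C B abar bbar = {j \<in> UNIV - B.
     0 < alpha C B abar bbar j \<and> alpha C B abar bbar j < \<infinity> \<and>
     alpha C B abar bbar j < beta C B abar bbar j \<and> beta C B abar bbar j < \<infinity>}"

definition SkC :: "(real^'n) set \<Rightarrow> 'n set \<Rightarrow> ('n \<Rightarrow> 'n \<Rightarrow> real) \<Rightarrow> ('n \<Rightarrow> real) \<Rightarrow> 'n \<Rightarrow> (real^'n) set" where
  "SkC C B abar bbar k =
     {xbar B bbar + y + \<mu> *\<^sub>R rbar B abar k + d | y \<mu> d.
        y \<in> convex hull (\<Union>j\<in>N2 C B abar bbar.
               {t *\<^sub>R rbar B abar j | t. 0 \<le> t \<and> ereal t < beta C B abar bbar j})
        \<and> \<mu> \<le> 0 \<and> d \<in> recc C}"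

definition Jset :: "(real^'n) set \<Rightarrow> 'n set \<Rightarrow> ('n \<Rightarrow> 'n \<Rightarrow> real) \<Rightarrow> ('n \<Rightarrow> real) \<Rightarrow> 'n \<Rightarrow> 'n set" where
  "Jset C B abar bbar k = {i \<in> UNIV - B. rbar B abar i \<in> recc (SkC C B abar bbar k)}"

end

theory Submission
  imports Defs
begin

(* Suppose r^k were a recession direction of S_k^C. Starting from xbar in S_k^C and moving
   beyond beta_k along r^k, write the point as xbar + y + mu r^k + d. Every generator of the
   convex hull has nonnegative nonbasic coordinates and k-th coordinate at most beta_k, while
   d in recc C is contained in recc P^B, whose elements are nonnegative combinations of the
   r^j determined by their nonbasic coordinates. Comparing coordinates forces d to be a
   positive multiple of r^k, so r^k lies in recc C; since the halfline from xbar along r^k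
   meets C (alpha_k finite), it then stays in C, contradicting beta_k finite. *)

lemma reccD: "d \<in> recc K \<Longrightarrow> x \<in> K \<Longrightarrow> 0 \<le> t \<Longrightarrow> x + t *\<^sub>R d \<in> K"
  unfolding recc_def by blast

lemma recc_scaleR: "d \<in> recc K \<Longrightarrow> 0 < c \<Longrightarrow> c *\<^sub>R d \<in> recc K"
  unfolding recc_def by (simp add: zero_le_mult_iff)

lemma xbar_in_PB: "xbar B bbar \<in> PB B abar bbar"
  by (simp add: PB_def xbar_def)

lemma recc_PB_nonneg:
  assumes "d \<in> recc (PB B abar bbar)" and "j \<notin> B"
  shows "0 \<le> d $ j"
  using reccD[OF assms(1) xbar_in_PB, of 1] assms(2) by (simp add: PB_def xbar_def)

lemma recc_PB_eq_sum_rbar: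
  assumes "d \<in> recc (PB B abar bbar)"
  shows "d = (\<Sum>j\<in>UNIV - B. d $ j *\<^sub>R rbar B abar j)"
proof -
  have basic: "d $ i = - (\<Sum>j\<in>UNIV - B. abar i j * d $ j)" if "i \<in> B" for i
    using reccD[OF assms xbar_in_PB, of 1] that by (simp add: PB_def xbar_def)
  show ?thesis
  proof (rule vec_eq_iff[THEN iffD2], intro allI)
    fix i
    show "d $ i = (\<Sum>j\<in>UNIV - B. d $ j *\<^sub>R rbar B abar j) $ i"
    proof (cases "i \<in> B")
      case True
      then show ?thesis
        by (simp add: basic rbar_def sum_negf mult.commute)
    next
      case False
      then show ?thesis
        by (simp add: rbar_def if_distrib[of "(*) _"] sum.delta cong: if_cong)
    qed
  qed
qed

lemma beta_eq_infinity_if_rbar_in_recc: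
  assumes rC: "rbar B abar j \<in> recc C" and "alpha C B abar bbar j < \<infinity>"
  shows "beta C B abar bbar j = \<infinity>"
proof -
  let ?T = "{t. 0 \<le> t \<and> xbar B bbar + t *\<^sub>R rbar B abar j \<in> C}"
  have "?T \<noteq> {}"
    using assms(2) unfolding alpha_def by (metis Inf_empty image_empty top_ereal_def less_irrefl)
  then obtain t0 where t0: "0 \<le> t0" "xbar B bbar + t0 *\<^sub>R rbar B abar j \<in> C"
    by blast
  have "t0 + real n \<in> ?T" for n :: nat
    using reccD[OF rC t0(2), of "real n"] t0(1) by (simp add: scaleR_add_left add.assoc)
  then have "\<exists>t\<in>?T. ereal (real n) \<le> ereal t" for n :: nat
    using t0(1) by (intro bexI[of _ "t0 + real n"]) auto
  then show ?thesis
    unfolding beta_def by (rule SUP_PInfty)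
qed

definition truncated_rays ::
    "(real^'n) set \<Rightarrow> 'n set \<Rightarrow> ('n \<Rightarrow> 'n \<Rightarrow> real) \<Rightarrow> ('n \<Rightarrow> real) \<Rightarrow> (real^'n) set" where
  "truncated_rays C B abar bbar =
     (\<Union>j\<in>N2 C B abar bbar. {t *\<^sub>R rbar B abar j | t. 0 \<le> t \<and> ereal t < beta C B abar bbar j})"

lemmas SkC_eq = SkC_def[folded truncated_rays_def]

lemma convex_hull_truncated_rays_subset:
  assumes "k \<notin> B" and "beta C B abar bbar k = ereal c" and "0 \<le> c"
  shows "convex hull truncated_rays C B abar bbar
           \<subseteq> {z. \<forall>i. i \<notin> B \<longrightarrow> 0 \<le> z $ i \<and> (i = k \<longrightarrow> z $ i \<le> c)}"
proof (rule hull_minimal)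
  show "truncated_rays C B abar bbar
          \<subseteq> {z. \<forall>i. i \<notin> B \<longrightarrow> 0 \<le> z $ i \<and> (i = k \<longrightarrow> z $ i \<le> c)}"
    using assms by (auto simp: truncated_rays_def rbar_def)
  have "convex {v::real. i \<notin> B \<longrightarrow> 0 \<le> v \<and> (i = k \<longrightarrow> v \<le> c)}" for i
  proof -
    consider "i \<in> B" | "i \<notin> B" "i = k" | "i \<notin> B" "i \<noteq> k" by blast
    then show ?thesis
      by cases (simp_all add: Collect_conj_eq convex_Int flip: atLeast_def atMost_def)
  qed
  then show "convex {z. \<forall>i. i \<notin> B \<longrightarrow> 0 \<le> z $ i \<and> (i = k \<longrightarrow> z $ i \<le> c)}"
    by (rule convex_box_cart)
qed

lemma xbar_in_SkC:
  assumes "j \<in> N2 C B abar bbar"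
  shows "xbar B bbar \<in> SkC C B abar bbar k"
proof -
  have "0 < beta C B abar bbar j"
    using assms by (auto simp: N2_def)
  then have "0 \<in> truncated_rays C B abar bbar"
    using assms unfolding truncated_rays_def by (force simp flip: zero_ereal_def)
  then have "0 \<in> convex hull truncated_rays C B abar bbar"
    by (rule hull_inc)
  moreover have "0 \<in> recc C"
    by (simp add: recc_def)
  ultimately show ?thesis
    unfolding SkC_eq by (auto intro!: exI[of _ 0] exI[of _ "0::real"])
qed

lemma rbar_in_recc_if_in_recc_SkC:
  assumes rec: "recc C \<subseteq> recc (PB B abar bbar)" and kN2: "k \<in> N2 C B abar bbar"
    and rS: "rbar B abar k \<in> recc (SkC C B abar bbar k)"
  shows "rbar B abar k \<in> recc C"
proof -
  let ?r = "rbar B abar"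
  have kB: "k \<notin> B"
    using kN2 by (simp add: N2_def)
  obtain c where c: "beta C B abar bbar k = ereal c" and "0 \<le> c"
    using kN2 unfolding N2_def
    by (cases "beta C B abar bbar k") (auto dest: order.strict_trans)
  have "xbar B bbar + (c + 1) *\<^sub>R ?r k \<in> SkC C B abar bbar k"
    using reccD[OF rS xbar_in_SkC[OF kN2], of "c + 1"] \<open>0 \<le> c\<close> by simp
  then obtain y \<mu> d where eq: "xbar B bbar + (c + 1) *\<^sub>R ?r k = xbar B bbar + y + \<mu> *\<^sub>R ?r k + d"
    and y: "y \<in> convex hull truncated_rays C B abar bbar" and "\<mu> \<le> 0" and dC: "d \<in> recc C"
    unfolding SkC_eq by blast
  have dPB: "d \<in> recc (PB B abar bbar)"
    using dC rec by blast
  have d_eq: "d = (c + 1 - \<mu>) *\<^sub>R ?r k - y"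
    using eq by (simp add: algebra_simps)
  have y_bounds: "0 \<le> y $ i" "i = k \<Longrightarrow> y $ i \<le> c" if "i \<notin> B" for i
    using convex_hull_truncated_rays_subset[OF kB c \<open>0 \<le> c\<close>] y that by blast+
  have d_zero: "d $ j = 0" if "j \<notin> B" "j \<noteq> k" for j
    using recc_PB_nonneg[OF dPB that(1)] y_bounds(1)[OF that(1)] d_eq that
    by (simp add: rbar_def)
  define \<delta> where "\<delta> = d $ k"
  have "0 < \<delta>"
    using y_bounds(2)[OF kB] d_eq kB \<open>\<mu> \<le> 0\<close> \<open>0 \<le> c\<close> by (simp add: rbar_def \<delta>_def)
  have "d = (\<Sum>j\<in>UNIV - B. d $ j *\<^sub>R ?r j)"
    by (rule recc_PB_eq_sum_rbar[OF dPB])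
  also have "\<dots> = (\<Sum>j\<in>{k}. d $ j *\<^sub>R ?r j)"
    using kB d_zero by (intro sum.mono_neutral_right) auto
  finally have "d = \<delta> *\<^sub>R ?r k"
    by (simp add: \<delta>_def)
  then show ?thesis
    using recc_scaleR[OF dC, of "1 / \<delta>"] \<open>0 < \<delta>\<close> by simp
qed

theorem proposition6:
  fixes A :: "real^'n^'m" and b :: "real^'m" and C :: "(real^'n) set"
    and B :: "'n set" and abar :: "'n \<Rightarrow> 'n \<Rightarrow> real" and bbar :: "'n \<Rightarrow> real" and k :: 'n
  assumes "rank A = CARD('m)"
    and "is_basis_of A b B"
    and "is_tableau A b B abar bbar"
    and "\<forall>i\<in>B. 0 \<le> bbar i"
    and "open C" and "convex C"
    and "xbar B bbar \<notin> closure C"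
    and rec: "recc C \<subseteq> recc (PB B abar bbar)"
    and kN2: "k \<in> N2 C B abar bbar"
  shows "k \<notin> Jset C B abar bbar k \<and> rbar B abar k \<notin> recc (SkC C B abar bbar k)"
proof -
  have "alpha C B abar bbar k < \<infinity>" and "beta C B abar bbar k < \<infinity>"
    using kN2 by (simp_all add: N2_def)
  have not_recc: "rbar B abar k \<notin> recc (SkC C B abar bbar k)"
  proof
    assume "rbar B abar k \<in> recc (SkC C B abar bbar k)"
    then have "rbar B abar k \<in> recc C"
      using rbar_in_recc_if_in_recc_SkC rec kN2 by blast
    then have "beta C B abar bbar k = \<infinity>"
      using beta_eq_infinity_if_rbar_in_recc \<open>alpha C B abar bbar k < \<infinity>\<close> by blast
    with \<open>beta C B abar bbar k < \<infinity>\<close> show False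
      by simp
  qed
  then show ?thesis
    by (simp add: Jset_def)
qed

end
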